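(* Let $\mathcal{P}=\{\alpha_i\}_{i=1}^{3g-3+n}$ be a pants decomposition of $S_{g,n}$ with Fenchel–Nielsen coordinates $(\ell_i,\tau_i)_{i=1}^{3g-3+n}$. Let $\mathcal{F}:\mathcal{T}_{g,n}\to\mathbb{R}_+$ be a function. Then $\mathcal{F}$ is bounding with respect to these Fenchel–Nielsen coordinates if and only if, for every $Y\in\mathcal{T}_{g,n}$ and every $i$, \[ \sup_{Z\in\mathrm{Mod}_{g,n}\cdot Y}\left\{\frac{\ell_i(Z)+|\tau_i(Z)|}{\mathcal{F}(Z)}\right\}<+\infty . \]
   Context: $\mathcal{T}_{g,n}$ is the Teichmüller space of $S_{g,n}$, an oriented surface of genus $g$ with $n>0$ punctures and $2g-2+n>0$. $\mathrm{Mod}_{g,n}$ is its mapping class group, acting by change of marking. $\ell_i$ is the hyperbolic length of $\alpha_i$ and $\tau_i$ is the Fenchel–Nielsen twist parameter along $\alpha_i$ (measured in length). For $\mathbf m=(m_1,\dots,m_{3g-3+n})\in\mathbb{Z}^{3g-3+n}$ let \[ \mathcal{C}^{\mathbf m}_{\mathcal P}=\{Y\in\mathcal{T}_{g,n}: m_i\ell_i(Y)\le\tau_i(Y)\le(m_i+1)\ell_i(Y)\ \text{for all } i\}. \] $\mathcal{F}$ is called bounding with respect to $(\ell_i,\tau_i)$ if for every $Y\in\mathcal{T}_{g,n}$ there is a constant $C>0$ with the following property: for every $L>0$, every $\mathbf m$, every $Z\in\mathrm{Mod}_{g,n}\cdot Y\cap\mathcal{C}^{\mathbf m}_{\mathcal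 P}\cap\mathcal{F}^{-1}([0,L])$ and every $i$, \[ \ell_i(Z)\le C\cdot\frac{L}{\max\{|m_i|,|m_i+1|\}}. \] *)

theory Defs
  imports Complex_Main "HOL-Library.FuncSet"
begin

text \<open>Abstract model of Teichmueller space 'T with Fenchel-Nielsen coordinate functions
  len i (hyperbolic length of alpha_i) and tw i (twist along alpha_i), i < N = 3g-3+n,
  and the mapping class group 'm acting by act.\<close>

definition orbit :: "('m \<Rightarrow> 'T \<Rightarrow> 'T) \<Rightarrow> 'T \<Rightarrow> 'T set" where
  "orbit act Y = range (\<lambda>\<phi>. act \<phi> Y)"

definition FN_cell :: "nat \<Rightarrow> (nat \<Rightarrow> 'T \<Rightarrow> real) \<Rightarrow> (nat \<Rightarrow> 'T \<Rightarrow> real) \<Rightarrow> (nat \<Rightarrow> int) \<Rightarrow> 'T set" where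
  "FN_cell N len tw m =
     {Y. \<forall>i<N. of_int (m i) * len i Y \<le> tw i Y \<and> tw i Y \<le> (of_int (m i) + 1) * len i Y}"

definition bounding ::
  "nat \<Rightarrow> (nat \<Rightarrow> 'T \<Rightarrow> real) \<Rightarrow> (nat \<Rightarrow> 'T \<Rightarrow> real) \<Rightarrow> ('m \<Rightarrow> 'T \<Rightarrow> 'T) \<Rightarrow> ('T \<Rightarrow> real) \<Rightarrow> bool" where
  "bounding N len tw act F \<longleftrightarrow>
     (\<forall>Y. \<exists>C>0. \<forall>L>0. \<forall>m. \<forall>Z \<in> orbit act Y \<inter> FN_cell N len tw m \<inter> F -` {0..L}.
        \<forall>i<N. len i Z \<le> C * L / of_int (max \<bar>m i\<bar> \<bar>m i + 1\<bar>))"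

end

theory Submission
  imports Defs
begin

text \<open>If the twist t lies in the cell [m l, (m+1) l] of a length l > 0 and
  M = max |m| |m+1| \<ge> 1, then M l \<le> l + |t| \<le> 2 M l. So the bounding condition
  l \<le> C L / M, whose strongest instance is L = F(Z) and the cell m = \<lfloor>t/l\<rfloor> containing Z,
  says exactly that (l + |t|) / F(Z) is bounded, up to a factor 2. The argument works on any
  set of points: the group action only selects the orbits, and the Fenchel-Nielsen
  parametrisation only supplies positivity of the lengths.\<close>

lemma max_abs_abs_succ_ge_one: "(1::int) \<le> max \<bar>m\<bar> \<bar>m + 1\<bar>"
  by linarith

lemma floor_divide_cell:
  fixes l t :: real
  assumes "l > 0"
  shows "of_int \<lfloor>t / l\<rfloor> * l \<le> t" and "t \<le> (of_int \<lfloor>t / l\<rfloor> + 1) * l"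
proof -
  have "of_int \<lfloor>t / l\<rfloor> \<le> t / l" and "t / l < of_int \<lfloor>t / l\<rfloor> + 1"
    by linarith+
  with assms show "of_int \<lfloor>t / l\<rfloor> * l \<le> t" and "t \<le> (of_int \<lfloor>t / l\<rfloor> + 1) * l"
    by (metis pos_le_divide_eq, metis pos_divide_less_eq less_imp_le)
qed

lemma cell_index_length_le:
  fixes l t :: real and m :: int
  assumes "l > 0" "of_int m * l \<le> t" "t \<le> (of_int m + 1) * l"
  shows "of_int (max \<bar>m\<bar> \<bar>m + 1\<bar>) * l \<le> l + \<bar>t\<bar>"
proof (cases "m \<ge> 0")
  case True
  then have "0 \<le> of_int m * l" using assms(1) by simp
  with True assms show ?thesis by (simp add: algebra_simps)
next
  case False
  then have "(of_int m + 1) * l \<le> 0" using assms(1) by (simp add: mult_nonpos_nonneg)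
  with False assms show ?thesis by (simp add: algebra_simps)
qed

lemma length_twist_le_cell_index:
  fixes l t :: real and m :: int
  assumes "l > 0" "of_int m * l \<le> t" "t \<le> (of_int m + 1) * l"
  shows "l + \<bar>t\<bar> \<le> 2 * (of_int (max \<bar>m\<bar> \<bar>m + 1\<bar>) * l)"
proof -
  have "\<bar>t\<bar> \<le> of_int (max \<bar>m\<bar> \<bar>m + 1\<bar>) * l"
  proof (cases "m \<ge> 0")
    case True
    then have "0 \<le> t" using assms(1,2) by (meson mult_nonneg_nonneg of_int_0_le_iff less_imp_le order_trans)
    with True assms show ?thesis by (simp add: algebra_simps)
  next
    case False
    then have "(of_int m + 1) * l \<le> 0" using assms(1) by (simp add: mult_nonpos_nonneg)
    with False assms show ?thesis by (simp add: algebra_simps)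
  qed
  moreover have "l \<le> of_int (max \<bar>m\<bar> \<bar>m + 1\<bar>) * l"
    using max_abs_abs_succ_ge_one[of m] assms(1) by simp
  ultimately show ?thesis by linarith
qed

definition bounding_on ::
  "nat \<Rightarrow> (nat \<Rightarrow> 'T \<Rightarrow> real) \<Rightarrow> (nat \<Rightarrow> 'T \<Rightarrow> real) \<Rightarrow> ('T \<Rightarrow> real) \<Rightarrow> 'T set \<Rightarrow> bool" where
  "bounding_on N len tw F S \<longleftrightarrow>
     (\<exists>C>0. \<forall>L>0. \<forall>m. \<forall>Z \<in> S \<inter> FN_cell N len tw m \<inter> F -` {0..L}.
        \<forall>i<N. len i Z \<le> C * L / of_int (max \<bar>m i\<bar> \<bar>m i + 1\<bar>))"

lemma bounding_iff_bounding_on_orbits: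
  "bounding N len tw act F \<longleftrightarrow> (\<forall>Y. bounding_on N len tw F (orbit act Y))"
  by (simp add: bounding_def bounding_on_def)

lemma bdd_above_ratio_if_bounding_on:
  fixes len tw :: "nat \<Rightarrow> 'T \<Rightarrow> real" and F :: "'T \<Rightarrow> real"
  assumes len_pos: "\<And>i Z. i < N \<Longrightarrow> len i Z > 0" and F_pos: "\<And>Z. F Z > 0"
    and "bounding_on N len tw F S" and "i < N"
  shows "bdd_above ((\<lambda>Z. (len i Z + \<bar>tw i Z\<bar>) / F Z) ` S)"
proof -
  obtain C where cell_bound: "\<forall>L>0. \<forall>m. \<forall>Z \<in> S \<inter> FN_cell N len tw m \<inter> F -` {0..L}.
                      \<forall>i<N. len i Z \<le> C * L / of_int (max \<bar>m i\<bar> \<bar>m i + 1\<bar>)"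
    using \<open>bounding_on N len tw F S\<close> unfolding bounding_on_def by blast
  show ?thesis
  proof (rule bdd_aboveI2)
    fix Z assume "Z \<in> S"
    define m where "m j = \<lfloor>tw j Z / len j Z\<rfloor>" for j
    define M :: real where "M = of_int (max \<bar>m i\<bar> \<bar>m i + 1\<bar>)"
    have cell: "of_int (m j) * len j Z \<le> tw j Z" "tw j Z \<le> (of_int (m j) + 1) * len j Z"
      if "j < N" for j
      unfolding m_def using floor_divide_cell len_pos[OF that] by blast+
    then have "Z \<in> S \<inter> FN_cell N len tw m \<inter> F -` {0..F Z}"
      using \<open>Z \<in> S\<close> F_pos[of Z] by (simp add: FN_cell_def less_imp_le)
    then have "len i Z \<le> C * F Z / M"
      using cell_bound F_pos[of Z] \<open>i < N\<close> unfolding M_def by blast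
    moreover have "M > 0"
      using max_abs_abs_succ_ge_one[of "m i"] unfolding M_def by linarith
    ultimately have "M * len i Z \<le> C * F Z"
      by (simp add: pos_le_divide_eq mult.commute)
    moreover have "len i Z + \<bar>tw i Z\<bar> \<le> 2 * (M * len i Z)"
      unfolding M_def using length_twist_le_cell_index len_pos cell \<open>i < N\<close> by blast
    ultimately have "len i Z + \<bar>tw i Z\<bar> \<le> 2 * C * F Z" by linarith
    then show "(len i Z + \<bar>tw i Z\<bar>) / F Z \<le> 2 * C"
      using F_pos[of Z] by (simp add: pos_divide_le_eq)
  qed
qed

lemma bounding_on_if_bdd_above_ratio:
  fixes len tw :: "nat \<Rightarrow> 'T \<Rightarrow> real" and F :: "'T \<Rightarrow> real"
  assumes len_pos: "\<And>i Z. i < N \<Longrightarrow> len i Z > 0" and F_pos: "\<And>Z. F Z > 0"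
    and bdd: "\<forall>i<N. bdd_above ((\<lambda>Z. (len i Z + \<bar>tw i Z\<bar>) / F Z) ` S)"
  shows "bounding_on N len tw F S"
proof -
  have "bdd_above (\<Union>i<N. (\<lambda>Z. (len i Z + \<bar>tw i Z\<bar>) / F Z) ` S)"
    using bdd by simp
  then obtain b where b: "\<And>i Z. i < N \<Longrightarrow> Z \<in> S \<Longrightarrow> (len i Z + \<bar>tw i Z\<bar>) / F Z \<le> b"
    unfolding bdd_above_def by blast
  define C where "C = max b 1"
  have "len i Z \<le> C * L / of_int (max \<bar>m i\<bar> \<bar>m i + 1\<bar>)"
    if "L > 0" and Z: "Z \<in> S \<inter> FN_cell N len tw m \<inter> F -` {0..L}" and "i < N" for L m Z i
  proof -
    define M :: real where "M = of_int (max \<bar>m i\<bar> \<bar>m i + 1\<bar>)"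
    have cell: "of_int (m i) * len i Z \<le> tw i Z" "tw i Z \<le> (of_int (m i) + 1) * len i Z"
      using Z \<open>i < N\<close> by (auto simp: FN_cell_def)
    have "M * len i Z \<le> len i Z + \<bar>tw i Z\<bar>"
      unfolding M_def using cell_index_length_le[OF len_pos[OF \<open>i < N\<close>] cell] .
    also have "\<dots> \<le> b * F Z"
      using b[OF \<open>i < N\<close>, of Z] Z F_pos[of Z] by (simp add: pos_divide_le_eq)
    also have "\<dots> \<le> C * F Z"
      using F_pos[of Z] by (simp add: C_def)
    also have "\<dots> \<le> C * L"
      using Z by (intro mult_left_mono) (auto simp: C_def)
    finally have "M * len i Z \<le> C * L" .
    moreover have "M > 0"
      using max_abs_abs_succ_ge_one[of "m i"] unfolding M_def by linarith
    ultimately show ?thesis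
      unfolding M_def[symmetric] by (simp add: pos_le_divide_eq mult.commute)
  qed
  moreover have "C > 0" by (simp add: C_def)
  ultimately show ?thesis unfolding bounding_on_def by blast
qed

lemma bounding_on_iff_bdd_above_ratio:
  fixes len tw :: "nat \<Rightarrow> 'T \<Rightarrow> real" and F :: "'T \<Rightarrow> real"
  assumes "\<And>i Z. i < N \<Longrightarrow> len i Z > 0" and "\<And>Z. F Z > 0"
  shows "bounding_on N len tw F S \<longleftrightarrow>
           (\<forall>i<N. bdd_above ((\<lambda>Z. (len i Z + \<bar>tw i Z\<bar>) / F Z) ` S))"
  using bdd_above_ratio_if_bounding_on[of N len F] bounding_on_if_bdd_above_ratio[of N len F] assms
  by metis

theorem proposition4p2:
  fixes g n N :: nat
    and len tw :: "nat \<Rightarrow> 'T \<Rightarrow> real"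
    and act :: "'m::group_add \<Rightarrow> 'T \<Rightarrow> 'T"
    and F :: "'T \<Rightarrow> real"
  assumes "n > 0" and "2 * g + n > 2"
    and "N = 3 * g + n - 3"
    and FN_bij: "bij_betw (\<lambda>Y. (\<lambda>i\<in>{..<N}. (len i Y, tw i Y))) UNIV
                   ({..<N} \<rightarrow>\<^sub>E ({0<..} \<times> UNIV))"
    and act_id: "\<And>Y. act 0 Y = Y"
    and act_comp: "\<And>a b Y. act (a + b) Y = act a (act b Y)"
    and F_pos: "\<And>Y. F Y > 0"
  shows "bounding N len tw act F \<longleftrightarrow>
         (\<forall>Y. \<forall>i<N. bdd_above ((\<lambda>Z. (len i Z + \<bar>tw i Z\<bar>) / F Z) ` orbit act Y))"
proof -
  have len_pos: "len i Z > 0" if "i < N" for i Z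
  proof -
    have "(\<lambda>i\<in>{..<N}. (len i Z, tw i Z)) \<in> {..<N} \<rightarrow>\<^sub>E ({0<..} \<times> UNIV)"
      using bij_betwE[OF FN_bij] by blast
    with that show ?thesis by (auto simp: PiE_def Pi_def)
  qed
  show ?thesis
    unfolding bounding_iff_bounding_on_orbits
    using bounding_on_iff_bdd_above_ratio[of N len F] len_pos F_pos by metis
qed

end
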